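(* Let $R$ be a commutative ring such that for every $a\in R$, either $a$ or $1-a$ is a stable element. Then $R$ is locally stable.
   Context: All rings are commutative with identity. A ring $S$ has stable range 1 if whenever $a,b\in S$ with $aS+bS=S$ there is $y\in S$ with $a+by$ a unit. An element $a\in R$ is stable if the ring $R/aR$ has stable range 1. $R$ is locally stable if whenever $a,b\in R$ with $aR+bR=R$ there is $y\in R$ such that $a+by$ is stable. *)

theory Defs
  imports "HOL-Algebra.Algebra"
begin

definition stable_range_one :: "('a, 'b) ring_scheme \<Rightarrow> bool" where
  "stable_range_one S \<longleftrightarrow>
     (\<forall>a \<in> carrier S. \<forall>b \<in> carrier S.
        (\<exists>x \<in> carrier S. \<exists>z \<in> carrier S. a \<otimes>\<^bsub>S\<^esub> x \<oplus>\<^bsub>S\<^esub> b \<otimes>\<^bsub>S\<^esub> z = \<one>\<^bsub>S\<^esub>)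
        \<longrightarrow> (\<exists>y \<in> carrier S. a \<oplus>\<^bsub>S\<^esub> b \<otimes>\<^bsub>S\<^esub> y \<in> Units S))"

definition stable_elem :: "('a, 'b) ring_scheme \<Rightarrow> 'a \<Rightarrow> bool" where
  "stable_elem R a \<longleftrightarrow> stable_range_one (R Quot (PIdl\<^bsub>R\<^esub> a))"

definition locally_stable :: "('a, 'b) ring_scheme \<Rightarrow> bool" where
  "locally_stable R \<longleftrightarrow>
     (\<forall>a \<in> carrier R. \<forall>b \<in> carrier R.
        (\<exists>x \<in> carrier R. \<exists>z \<in> carrier R. a \<otimes>\<^bsub>R\<^esub> x \<oplus>\<^bsub>R\<^esub> b \<otimes>\<^bsub>R\<^esub> z = \<one>\<^bsub>R\<^esub>)
        \<longrightarrow> (\<exists>y \<in> carrier R. stable_elem R (a \<oplus>\<^bsub>R\<^esub> b \<otimes>\<^bsub>R\<^esub> y)))"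

end

theory Submission
  imports Defs
begin

text \<open>If \<open>a x + b z = 1\<close>, then \<open>t = a (x - 1)\<close> satisfies \<open>1 - t = a + b z\<close>. By hypothesis
  either \<open>1 - t\<close> is stable, and \<open>y = z\<close> works, or \<open>t\<close> is stable; then so is its factor \<open>a\<close>
  (and \<open>y = 0\<close> works), because \<open>R/aR\<close> is a quotient of \<open>R/tR\<close> and stable range one passes
  to quotients: a relation \<open>a x + b z \<equiv> 1\<close> modulo the larger ideal can be made exact by
  moving the error into \<open>b z\<close>.\<close>

context ideal
begin

lemma FactRing_carrier_image: "carrier (R Quot I) = (\<lambda>x. I +> x) ` carrier R"
  by (auto simp: FactRing_def A_RCOSETS_def')

lemma FactRing_rcos_mult [simp]:
  "x \<in> carrier R \<Longrightarrow> y \<in> carrier R \<Longrightarrow> (I +> x) \<otimes>\<^bsub>R Quot I\<^esub> (I +> y) = I +> (x \<otimes> y)"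
  by (simp add: FactRing_def rcoset_mult_add)

lemma FactRing_rcos_add [simp]:
  "x \<in> carrier R \<Longrightarrow> y \<in> carrier R \<Longrightarrow> (I +> x) \<oplus>\<^bsub>R Quot I\<^esub> (I +> y) = I +> (x \<oplus> y)"
  by (simp add: FactRing_def a_rcos_sum)

lemma FactRing_one: "\<one>\<^bsub>R Quot I\<^esub> = I +> \<one>"
  by (simp add: FactRing_def)

lemma rcos_eq_iff: "x \<in> carrier R \<Longrightarrow> y \<in> carrier R \<Longrightarrow> I +> x = I +> y \<longleftrightarrow> x \<ominus> y \<in> I"
  using quotient_eq_iff_same_a_r_cos[OF is_ideal] by blast

lemma rcos_in_Units_iff:
  assumes "cring R" and u: "u \<in> carrier R"
  shows "I +> u \<in> Units (R Quot I) \<longleftrightarrow> (\<exists>w \<in> carrier R. u \<otimes> w \<ominus> \<one> \<in> I)"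
proof -
  interpret Q: cring "R Quot I" using quotient_is_cring[OF assms(1)] .
  have "I +> u \<in> Units (R Quot I) \<longleftrightarrow>
      (\<exists>W \<in> carrier (R Quot I). (I +> u) \<otimes>\<^bsub>R Quot I\<^esub> W = \<one>\<^bsub>R Quot I\<^esub>)"
    using u by (auto simp: Units_def FactRing_carrier_image Q.m_comm)
  also have "\<dots> \<longleftrightarrow> (\<exists>w \<in> carrier R. u \<otimes> w \<ominus> \<one> \<in> I)"
    using u by (simp add: FactRing_carrier_image FactRing_one rcos_eq_iff)
  finally show ?thesis .
qed

lemma stable_range_one_FactRing_iff:
  assumes "cring R"
  shows "stable_range_one (R Quot I) \<longleftrightarrow>
    (\<forall>a \<in> carrier R. \<forall>b \<in> carrier R.
       (\<exists>x \<in> carrier R. \<exists>z \<in> carrier R. a \<otimes> x \<oplus> b \<otimes> z \<ominus> \<one> \<in> I)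
       \<longrightarrow> (\<exists>y \<in> carrier R. \<exists>w \<in> carrier R. (a \<oplus> b \<otimes> y) \<otimes> w \<ominus> \<one> \<in> I))"
  by (simp add: stable_range_one_def FactRing_carrier_image FactRing_one rcos_eq_iff
      rcos_in_Units_iff[OF assms])

end

lemma stable_range_one_FactRing_mono:
  fixes R (structure)
  assumes R: "cring R" and I: "ideal I R" and J: "ideal J R" and "J \<subseteq> I"
    and "stable_range_one (R Quot J)"
  shows "stable_range_one (R Quot I)"
  unfolding ideal.stable_range_one_FactRing_iff[OF I R]
proof (intro ballI impI)
  interpret cring R by fact
  fix a b assume a: "a \<in> carrier R" and b: "b \<in> carrier R"
  assume "\<exists>x \<in> carrier R. \<exists>z \<in> carrier R. a \<otimes> x \<oplus> b \<otimes> z \<ominus> \<one> \<in> I"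
  then obtain x z where x: "x \<in> carrier R" and z: "z \<in> carrier R"
    and "a \<otimes> x \<oplus> b \<otimes> z \<ominus> \<one> \<in> I" by blast
  define i where "i = a \<otimes> x \<oplus> b \<otimes> z \<ominus> \<one>"
  have i_in_I: "i \<in> I" using \<open>a \<otimes> x \<oplus> b \<otimes> z \<ominus> \<one> \<in> I\<close> by (simp add: i_def)
  have i_carr: "i \<in> carrier R" using a b x z by (simp add: i_def)
  define b' where "b' = b \<otimes> z \<ominus> i"
  have b'_carr: "b' \<in> carrier R" using b z i_carr by (simp add: b'_def)
  have "a \<otimes> x \<oplus> b' \<otimes> \<one> \<ominus> \<one> = \<zero>"
    unfolding b'_def i_def using a b x z by algebra
  with \<open>stable_range_one (R Quot J)\<close> obtain y w where y: "y \<in> carrier R" and w: "w \<in> carrier R"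
    and "(a \<oplus> b' \<otimes> y) \<otimes> w \<ominus> \<one> \<in> J"
    using ideal.stable_range_one_FactRing_iff[OF J R] a b'_carr x
    by (metis additive_subgroup.zero_closed ideal.axioms(1)[OF J] one_closed)
  with \<open>J \<subseteq> I\<close> have "(a \<oplus> b' \<otimes> y) \<otimes> w \<ominus> \<one> \<in> I" by blast
  moreover have "i \<otimes> (y \<otimes> w) \<in> I"
    using ideal.I_r_closed[OF I] i_in_I y w by simp
  moreover have "(a \<oplus> b \<otimes> (z \<otimes> y)) \<otimes> w \<ominus> \<one> = ((a \<oplus> b' \<otimes> y) \<otimes> w \<ominus> \<one>) \<oplus> i \<otimes> (y \<otimes> w)"
    unfolding b'_def using a b z y w i_carr by algebra
  ultimately have "(a \<oplus> b \<otimes> (z \<otimes> y)) \<otimes> w \<ominus> \<one> \<in> I"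
    by (metis additive_subgroup.a_closed ideal.axioms(1)[OF I])
  then show "\<exists>y \<in> carrier R. \<exists>w \<in> carrier R. (a \<oplus> b \<otimes> y) \<otimes> w \<ominus> \<one> \<in> I"
    using z y w by blast
qed

lemma stable_elem_factor:
  fixes R (structure)
  assumes R: "cring R" and a: "a \<in> carrier R" and s: "s \<in> carrier R"
    and "stable_elem R (a \<otimes> s)"
  shows "stable_elem R a"
proof -
  interpret cring R by fact
  have "PIdl (a \<otimes> s) \<subseteq> PIdl a"
    using a s by (auto simp: cgenideal_def) (metis m_assoc m_closed m_comm)
  then show ?thesis
    using assms stable_range_one_FactRing_mono[OF R cgenideal_ideal[OF a] cgenideal_ideal]
    unfolding stable_elem_def by blast
qed

theorem theorem2p9:
  fixes R (structure)
  assumes "cring R"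
    and "\<forall>a \<in> carrier R. stable_elem R a \<or> stable_elem R (\<one> \<ominus> a)"
  shows "locally_stable R"
  unfolding locally_stable_def
proof (intro ballI impI)
  interpret cring R by fact
  fix a b assume a: "a \<in> carrier R" and b: "b \<in> carrier R"
  assume "\<exists>x \<in> carrier R. \<exists>z \<in> carrier R. a \<otimes> x \<oplus> b \<otimes> z = \<one>"
  then obtain x z where x: "x \<in> carrier R" and z: "z \<in> carrier R"
    and comax: "a \<otimes> x \<oplus> b \<otimes> z = \<one>" by blast
  define t where "t = a \<otimes> (x \<ominus> \<one>)"
  have "\<one> \<ominus> t = a \<otimes> x \<oplus> b \<otimes> z \<ominus> a \<otimes> (x \<ominus> \<one>)" by (simp add: comax t_def)
  also have "\<dots> = a \<oplus> b \<otimes> z" using a b x z by algebra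
  finally have one_minus_t: "\<one> \<ominus> t = a \<oplus> b \<otimes> z" .
  from assms(2) have "stable_elem R t \<or> stable_elem R (\<one> \<ominus> t)"
    using a x by (simp add: t_def)
  then show "\<exists>y \<in> carrier R. stable_elem R (a \<oplus> b \<otimes> y)"
  proof
    assume "stable_elem R t"
    then have "stable_elem R (a \<oplus> b \<otimes> \<zero>)"
      using stable_elem_factor[OF assms(1) a, of "x \<ominus> \<one>"] a b x by (simp add: t_def)
    then show ?thesis by blast
  next
    assume "stable_elem R (\<one> \<ominus> t)"
    then show ?thesis using one_minus_t z by metis
  qed
qed

end
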